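(* Let $n\ge2$, let $x\in\mathbb{C}^{n\times n}$ be generic (as defined in the context), and let $d=\operatorname{diag}(d(1),\ldots,d(n))$ be an invertible diagonal matrix. Put $\hat x=dxd^{-1}$ (which is generic with the same leading principal eigenvalues as $x$). With the same fixed orderings of the eigenvalues of the leading principal submatrices, let $b_m$ and $\hat b_m$ ($1\le m\le n-1$) be the dual coordinates of $x$ and of $\hat x$ respectively. Then \[ \hat b_m=b_m\,\frac{d(m+1)}{d(m)},\qquad 1\le m\le n-1. \]
   Context: For a square matrix $x$, $x_k$ is its leading principal $k\times k$ submatrix and $E(x_k)$ its eigenvalue multiset. A matrix $x\in\mathbb{C}^{n\times n}$ is generic if for every $1\le k\le n$ the eigenvalues of $x_k$ are distinct and for every $1\le k\le n-1$, $E(x_k)\cap E(x_{k+1})=\varnothing$. Fix, for each $k$, an ordering $\mu^{(k)}_1,\ldots,\mu^{(k)}_k$ of $E(x_k)$ and put $\Lambda_k=\operatorname{diag}(\mu^{(k)}_1,\ldots,\mu^{(k)}_k)$. For generic $x$ and $1\le m\le n-1$, let $g_m\in\mathrm{GL}(m)$ be the unique matrix with $x_m=g_m\Lambda_mg_m^{-1}$ whose last row consists of ones; the dual coordinates $b_m\in\mathbb{C}^m$ of $x$ are defined by $\begin{pmatrix} g_m^{-1}&0\\0&1\end{pmatrix} x_{m+1}\begin{pmatrix} g_m&0\\0&1\end{pmatrix}=\begin{pmatrix}\Lambda_m & c_m\\ b_m^{T} & \delta_{m+1}\end{pmatrix}$ for some $c_m\in\mathbb{C}^m$, $\delta_{m+1}\in\mathbb{C}$.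 *)

theory Defs
  imports "Jordan_Normal_Form.Matrix" "Jordan_Normal_Form.Char_Poly"
begin

text \<open>Matrices are Jordan_Normal_Form matrices, indices start at 0.
  The leading principal k x k submatrix x_k.\<close>
definition lead_sub :: "'a mat \<Rightarrow> nat \<Rightarrow> 'a mat" where
  "lead_sub x k = mat k k (\<lambda>(i,j). x $$ (i,j))"

definition mat_inv :: "'a :: semiring_1 mat \<Rightarrow> 'a mat" where
  "mat_inv A = (THE B. B \<in> carrier_mat (dim_row A) (dim_row A) \<and> inverts_mat A B \<and> inverts_mat B A)"

definition generic :: "nat \<Rightarrow> complex mat \<Rightarrow> bool" where
  "generic n x \<longleftrightarrow> x \<in> carrier_mat n n \<and>
     (\<forall>k\<in>{1..n}. card {\<mu>. eigenvalue (lead_sub x k) \<mu>} = k) \<and>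
     (\<forall>k\<in>{1..n-1}. {\<mu>. eigenvalue (lead_sub x k) \<mu>} \<inter> {\<mu>. eigenvalue (lead_sub x (k+1)) \<mu>} = {})"

definition valid_orderings :: "nat \<Rightarrow> complex mat \<Rightarrow> (nat \<Rightarrow> nat \<Rightarrow> complex) \<Rightarrow> bool" where
  "valid_orderings n x mu \<longleftrightarrow>
     (\<forall>k\<in>{1..n}. bij_betw (mu k) {..<k} {\<mu>. eigenvalue (lead_sub x k) \<mu>})"

definition Lambda :: "(nat \<Rightarrow> nat \<Rightarrow> complex) \<Rightarrow> nat \<Rightarrow> complex mat" where
  "Lambda mu k = mat_diag k (mu k)"

definition g_mat :: "complex mat \<Rightarrow> (nat \<Rightarrow> nat \<Rightarrow> complex) \<Rightarrow> nat \<Rightarrow> complex mat" where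
  "g_mat x mu m = (THE g. g \<in> carrier_mat m m \<and> invertible_mat g \<and>
      lead_sub x m = g * Lambda mu m * mat_inv g \<and> (\<forall>j<m. g $$ (m - 1, j) = 1))"

definition conj_block :: "complex mat \<Rightarrow> (nat \<Rightarrow> nat \<Rightarrow> complex) \<Rightarrow> nat \<Rightarrow> complex mat" where
  "conj_block x mu m =
     four_block_mat (mat_inv (g_mat x mu m)) (0\<^sub>m m 1) (0\<^sub>m 1 m) (1\<^sub>m 1)
     * lead_sub x (m+1)
     * four_block_mat (g_mat x mu m) (0\<^sub>m m 1) (0\<^sub>m 1 m) (1\<^sub>m 1)"

definition dual_coord :: "complex mat \<Rightarrow> (nat \<Rightarrow> nat \<Rightarrow> complex) \<Rightarrow> nat \<Rightarrow> complex vec" where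
  "dual_coord x mu m = vec m (\<lambda>j. conj_block x mu m $$ (m, j))"

end

theory Submission
  imports Defs
begin

text \<open>Conjugation by D = diag(d) conjugates every leading block, x_m becoming
  D_m x_m D_m^-1. Hence D_m g_m diagonalises the new block with the same ordered eigenvalues,
  and since its last row is d(m) times a row of ones, the new normalized eigenbasis is
  D_m g_m / d(m). This identification needs uniqueness of g_m, which is where genericity
  enters: an eigenvector of x_m with vanishing last entry would be an eigenvector of x_(m-1)
  for the same eigenvalue. The last row of the new x_(m+1) is d(m+1) times the old one
  multiplied by D_m^-1, so the factors D_m cancel in b_m and leave the scalar d(m+1)/d(m).\<close>

section \<open>Inverses and diagonal matrices\<close>

lemma mat_inv_eqI:
  assumes A: "A \<in> carrier_mat n n" and B: "B \<in> carrier_mat n n"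
    and AB: "A * B = 1\<^sub>m n" and BA: "B * A = 1\<^sub>m n"
  shows "mat_inv A = B"
  unfolding mat_inv_def
proof (rule the_equality)
  show "B \<in> carrier_mat (dim_row A) (dim_row A) \<and> inverts_mat A B \<and> inverts_mat B A"
    using A B AB BA unfolding inverts_mat_def by auto
next
  fix C assume "C \<in> carrier_mat (dim_row A) (dim_row A) \<and> inverts_mat A C \<and> inverts_mat C A"
  hence C: "C \<in> carrier_mat n n" and CA: "C * A = 1\<^sub>m n"
    using A unfolding inverts_mat_def by auto
  have "C = C * (A * B)" using C AB by simp
  also have "\<dots> = (C * A) * B" using A B C by (simp add: assoc_mult_mat)
  also have "\<dots> = B" using CA B by simp
  finally show "C = B" .
qed

lemma mat_inv_det_nonzero:
  assumes A: "A \<in> carrier_mat n n" and det: "det A \<noteq> (0::'a::field)"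
  shows "mat_inv A \<in> carrier_mat n n" "A * mat_inv A = 1\<^sub>m n" "mat_inv A * A = 1\<^sub>m n"
proof -
  obtain B where "B \<in> carrier_mat n n" "A * B = 1\<^sub>m n" "B * A = 1\<^sub>m n"
    using det_non_zero_imp_unit[OF A det, of undefined] unfolding Units_def ring_mat_def by auto
  with mat_inv_eqI[OF A this] show "mat_inv A \<in> carrier_mat n n" "A * mat_inv A = 1\<^sub>m n"
    "mat_inv A * A = 1\<^sub>m n" by simp_all
qed

lemma invertible_mat_iff_det:
  assumes A: "A \<in> carrier_mat n n"
  shows "invertible_mat A \<longleftrightarrow> det A \<noteq> (0::'a::field)"
proof
  assume "invertible_mat A"
  then obtain B where AB: "A * B = 1\<^sub>m n" and BA: "B * A = 1\<^sub>m (dim_row B)"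
    using A unfolding invertible_mat_def inverts_mat_def by auto
  have "B \<in> carrier_mat n n"
    using arg_cong[OF AB, of dim_col] arg_cong[OF BA, of dim_col] A by auto
  hence "det A * det B = 1" using arg_cong[OF AB, of det] det_mult[OF A] by simp
  thus "det A \<noteq> 0" by auto
next
  assume "det A \<noteq> 0"
  thus "invertible_mat A"
    using A mat_inv_det_nonzero[OF A] unfolding invertible_mat_def inverts_mat_def by auto
qed

lemma similar_iff_mult:
  assumes A: "A \<in> carrier_mat n n" and L: "L \<in> carrier_mat n n"
    and g: "g \<in> carrier_mat n n" and det: "det g \<noteq> (0::'a::field)"
  shows "A = g * L * mat_inv g \<longleftrightarrow> A * g = g * L"
proof -
  note inv = mat_inv_det_nonzero[OF g det]
  have "g * L * mat_inv g * g = g * L"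
    using g L inv by (simp add: assoc_mult_mat[of _ n n _ n _ n])
  moreover have "A * g * mat_inv g = A"
    using A g inv by (simp add: assoc_mult_mat[of _ n n _ n _ n])
  ultimately show ?thesis by metis
qed

lemma mat_diag_mult_carrier[simp]:
  "A \<in> carrier_mat n k \<Longrightarrow> mat_diag n e * A \<in> carrier_mat n k"
  by (rule mult_carrier_mat[OF mat_diag_dim])

lemma mat_diag_inverse:
  assumes "\<forall>i<n. e i \<noteq> (0::'a::field)"
  shows "mat_diag n e * mat_diag n (\<lambda>i. 1 / e i) = 1\<^sub>m n"
    and "mat_diag n (\<lambda>i. 1 / e i) * mat_diag n e = 1\<^sub>m n"
  unfolding mat_diag_diag using assms by (auto intro!: eq_matI simp: mat_diag_def)

lemma mat_inv_mat_diag: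
  assumes "\<forall>i<n. e i \<noteq> (0::'a::field)"
  shows "mat_inv (mat_diag n e) = mat_diag n (\<lambda>i. 1 / e i)"
  using mat_diag_inverse[OF assms] by (intro mat_inv_eqI) auto

lemma det_mat_diag_nonzero:
  assumes "\<forall>i<n. e i \<noteq> (0::'a::field)"
  shows "det (mat_diag n e) \<noteq> 0"
proof -
  have "det (mat_diag n e) * det (mat_diag n (\<lambda>i. 1 / e i)) = 1"
    using det_mult[OF mat_diag_dim mat_diag_dim, of n e "\<lambda>i. 1 / e i"]
    by (simp only: mat_diag_inverse(1)[OF assms] det_one)
  thus ?thesis by auto
qed

lemma mat_diag_mult_vec:
  fixes f :: "nat \<Rightarrow> 'a :: comm_ring_1"
  assumes v: "v \<in> carrier_vec n"
  shows "mat_diag n f *\<^sub>v v = vec n (\<lambda>j. f j * v $ j)"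
proof (rule eq_vecI)
  fix i assume "i < dim_vec (vec n (\<lambda>j. f j * v $ j))"
  hence i: "i < n" by simp
  have "row (mat_diag n f) i = f i \<cdot>\<^sub>v unit_vec n i"
    using i by (auto simp: mat_diag_def)
  hence "row (mat_diag n f) i \<bullet> v = f i * v $ i"
    using i v by simp
  thus "(mat_diag n f *\<^sub>v v) $ i = vec n (\<lambda>j. f j * v $ j) $ i"
    using i by (simp add: mat_diag_def)
qed (simp add: mat_diag_def)

lemma mult_mat_diag_iff_col:
  fixes A g :: "'a :: comm_ring_1 mat"
  assumes A: "A \<in> carrier_mat n n" and g: "g \<in> carrier_mat n n"
  shows "A * g = g * mat_diag n \<mu> \<longleftrightarrow> (\<forall>j<n. A *\<^sub>v col g j = \<mu> j \<cdot>\<^sub>v col g j)"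
proof -
  have right: "col (g * mat_diag n \<mu>) j = \<mu> j \<cdot>\<^sub>v col g j" if "j < n" for j
    using g that by (auto simp: mat_diag_mult_right[OF g] mult.commute)
  have left: "col (A * g) j = A *\<^sub>v col g j" if "j < n" for j
    using col_mult2[OF A g that] .
  show ?thesis
  proof
    assume "A * g = g * mat_diag n \<mu>"
    thus "\<forall>j<n. A *\<^sub>v col g j = \<mu> j \<cdot>\<^sub>v col g j" using left right by metis
  next
    assume eigen: "\<forall>j<n. A *\<^sub>v col g j = \<mu> j \<cdot>\<^sub>v col g j"
    show "A * g = g * mat_diag n \<mu>"
    proof (rule mat_col_eqI)
      fix j assume "j < dim_col (g * mat_diag n \<mu>)"
      hence "j < n" by (simp add: mat_diag_def)
      thus "col (A * g) j = col (g * mat_diag n \<mu>) j" using eigen left right by metis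
    qed (use A g in \<open>auto simp: mat_diag_def\<close>)
  qed
qed

lemma kernel_invariant_mat_diag:
  fixes A g :: "'a :: comm_ring_1 mat"
  assumes A: "A \<in> carrier_mat n n" and g: "g \<in> carrier_mat n n"
    and eigen: "A * g = g * mat_diag n \<mu>"
    and v: "v \<in> carrier_vec n" and ker: "g *\<^sub>v v = 0\<^sub>v n"
  shows "g *\<^sub>v (mat_diag n \<mu> *\<^sub>v v) = 0\<^sub>v n"
proof -
  have "g *\<^sub>v (mat_diag n \<mu> *\<^sub>v v) = (g * mat_diag n \<mu>) *\<^sub>v v"
    using assoc_mult_mat_vec[OF g mat_diag_dim v] by simp
  also have "\<dots> = (A * g) *\<^sub>v v" by (simp add: eigen)
  also have "\<dots> = A *\<^sub>v (g *\<^sub>v v)" using A g v by simp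
  also have "\<dots> = 0\<^sub>v n" using A by (auto simp: ker intro!: eq_vecI)
  finally show ?thesis .
qed

text \<open>Eigenvectors for distinct eigenvalues are linearly independent: a kernel vector of
  \<open>g\<close> with \<open>v $ j0 \<noteq> 0\<close> is turned into a multiple of the \<open>j0\<close>-th unit vector by the
  diagonal operators \<open>\<mu> - \<mu> l\<close>, \<open>l \<noteq> j0\<close>, which preserve the kernel.\<close>

lemma det_nonzero_if_distinct_eigenvalues:
  fixes A g :: "'a :: field mat"
  assumes A: "A \<in> carrier_mat n n" and g: "g \<in> carrier_mat n n"
    and eigen: "A * g = g * mat_diag n \<mu>" and inj: "inj_on \<mu> {..<n}"
    and cols: "\<forall>j<n. col g j \<noteq> 0\<^sub>v n"
  shows "det g \<noteq> 0"
proof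
  assume "det g = 0"
  then obtain v where v: "v \<in> carrier_vec n" "v \<noteq> 0\<^sub>v n" and ker: "g *\<^sub>v v = 0\<^sub>v n"
    using det_0_iff_vec_prod_zero[OF g] by auto
  define w where "w J = vec n (\<lambda>j. (\<Prod>l\<in>J. \<mu> j - \<mu> l) * v $ j)" for J
  have w_carrier: "w J \<in> carrier_vec n" for J unfolding w_def by simp
  have w_ker: "g *\<^sub>v w J = 0\<^sub>v n" if "finite J" for J
    using that
  proof (induction J rule: finite_induct)
    case empty
    have "w {} = v" using v unfolding w_def by auto
    thus ?case using ker by simp
  next
    case (insert a J)
    have "w (insert a J) = mat_diag n \<mu> *\<^sub>v w J - \<mu> a \<cdot>\<^sub>v w J"
      using insert.hyps by (auto simp: w_def mat_diag_mult_vec algebra_simps)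
    also have "g *\<^sub>v \<dots> = g *\<^sub>v (mat_diag n \<mu> *\<^sub>v w J) - \<mu> a \<cdot>\<^sub>v (g *\<^sub>v w J)"
      using mult_minus_distrib_mat_vec[OF g, of "mat_diag n \<mu> *\<^sub>v w J" "\<mu> a \<cdot>\<^sub>v w J"]
        mult_mat_vec[OF g w_carrier] mult_mat_vec_carrier[OF mat_diag_dim w_carrier] w_carrier by simp
    finally show ?case
      using kernel_invariant_mat_diag[OF A g eigen w_carrier insert.IH]
      by (auto simp: insert.IH intro!: eq_vecI)
  qed
  obtain j0 where j0: "j0 < n" "v $ j0 \<noteq> 0"
    using v by (metis eq_vecI carrier_vecD index_zero_vec)
  define c where "c = (\<Prod>l\<in>{..<n} - {j0}. \<mu> j0 - \<mu> l) * v $ j0"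
  have "c \<noteq> 0" using inj j0 unfolding c_def by (auto simp: inj_on_def)
  have "w ({..<n} - {j0}) = c \<cdot>\<^sub>v unit_vec n j0"
    unfolding w_def c_def by (intro eq_vecI) (auto simp: unit_vec_def intro!: prod_zero)
  moreover have "g *\<^sub>v unit_vec n j0 = col g j0"
    using g j0 by (auto intro!: eq_vecI)
  ultimately have "c \<cdot>\<^sub>v col g j0 = 0\<^sub>v n"
    using w_ker[of "{..<n} - {j0}"] g j0 by (simp add: mult_mat_vec)
  hence "c * g $$ (i, j0) = 0" if "i < n" for i
  proof -
    have "c * g $$ (i, j0) = (c \<cdot>\<^sub>v col g j0) $ i" using g j0 that by simp
    also have "\<dots> = 0" using that by (simp add: \<open>c \<cdot>\<^sub>v col g j0 = 0\<^sub>v n\<close>)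
    finally show ?thesis .
  qed
  hence "col g j0 = 0\<^sub>v n"
    using \<open>c \<noteq> 0\<close> g j0 by (intro eq_vecI) auto
  with cols j0 show False by simp
qed

section \<open>Leading principal submatrices of generic matrices\<close>

lemma lead_sub_carrier[simp]: "lead_sub x m \<in> carrier_mat m m"
  and lead_sub_dim[simp]: "dim_row (lead_sub x m) = m" "dim_col (lead_sub x m) = m"
  and lead_sub_index[simp]: "i < m \<Longrightarrow> j < m \<Longrightarrow> lead_sub x m $$ (i, j) = x $$ (i, j)"
  unfolding lead_sub_def by auto

lemma Lambda_carrier[simp]: "Lambda mu m \<in> carrier_mat m m"
  unfolding Lambda_def by simp

lemma lead_sub_mult_vec_index:
  assumes v: "v \<in> carrier_vec m" and i: "i < m"
  shows "(lead_sub x m *\<^sub>v v) $ i = (\<Sum>l<m. x $$ (i, l) * v $ l)"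
  using v i by (auto simp: scalar_prod_def lessThan_atLeast0 intro!: sum.cong)

lemma eigenvector_lead_sub_truncate:
  assumes eigen: "eigenvector (lead_sub x (Suc k)) v \<mu>" and last: "v $ k = 0"
  shows "eigenvector (lead_sub x k) (vec k (\<lambda>i. v $ i)) \<mu>"
proof -
  have v: "v \<in> carrier_vec (Suc k)" "v \<noteq> 0\<^sub>v (Suc k)"
    and Av: "lead_sub x (Suc k) *\<^sub>v v = \<mu> \<cdot>\<^sub>v v"
    using eigen unfolding eigenvector_def by auto
  obtain i0 where "i0 < Suc k" "v $ i0 \<noteq> 0"
    using v by (metis eq_vecI carrier_vecD index_zero_vec)
  with last have "i0 < k" by (cases "i0 = k") auto
  hence nonzero: "vec k (\<lambda>i. v $ i) \<noteq> 0\<^sub>v k"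
    using \<open>v $ i0 \<noteq> 0\<close> by (metis index_vec index_zero_vec(1))
  have "(lead_sub x k *\<^sub>v vec k (\<lambda>i. v $ i)) $ i = \<mu> * v $ i" if i: "i < k" for i
  proof -
    have "(lead_sub x k *\<^sub>v vec k (\<lambda>i. v $ i)) $ i = (\<Sum>l<k. x $$ (i, l) * v $ l)"
      using i by (subst lead_sub_mult_vec_index) auto
    also have "\<dots> = (\<Sum>l<Suc k. x $$ (i, l) * v $ l)" using last by simp
    also have "\<dots> = (lead_sub x (Suc k) *\<^sub>v v) $ i"
      using i v by (intro lead_sub_mult_vec_index[symmetric]) auto
    also have "\<dots> = \<mu> * v $ i" using i v by (simp add: Av)
    finally show ?thesis .
  qed
  thus ?thesis using nonzero unfolding eigenvector_def by (auto intro!: eq_vecI)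
qed

lemma generic_eigenvector_last_nonzero:
  assumes gen: "generic n x" and m: "m \<in> {1..n}"
    and eigen: "eigenvector (lead_sub x m) v \<mu>"
  shows "v $ (m - 1) \<noteq> 0"
proof
  assume last: "v $ (m - 1) = 0"
  obtain k where k: "m = Suc k" using m by (cases m) auto
  have "eigenvector (lead_sub x k) (vec k (\<lambda>i. v $ i)) \<mu>"
    using eigenvector_lead_sub_truncate[of x k v \<mu>] eigen last k by simp
  moreover from this have "k \<noteq> 0" unfolding eigenvector_def by auto
  ultimately have "\<mu> \<in> {\<mu>. eigenvalue (lead_sub x k) \<mu>} \<inter> {\<mu>. eigenvalue (lead_sub x (k + 1)) \<mu>}"
    using eigen k unfolding eigenvalue_def by auto
  moreover have "k \<in> {1..n - 1}" using m k \<open>k \<noteq> 0\<close> by auto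
  ultimately show False using gen unfolding generic_def by blast
qed

section \<open>Normalized eigenbases\<close>

definition normalized_eigenbasis :: "'a :: field mat \<Rightarrow> 'a mat \<Rightarrow> 'a mat \<Rightarrow> bool" where
  "normalized_eigenbasis A L g \<longleftrightarrow> g \<in> carrier_mat (dim_row A) (dim_row A) \<and> det g \<noteq> 0 \<and>
     A * g = g * L \<and> (\<forall>j<dim_row A. g $$ (dim_row A - 1, j) = 1)"

lemma g_mat_eq_The:
  "g_mat x mu m = (THE g. normalized_eigenbasis (lead_sub x m) (Lambda mu m) g)"
proof -
  have "(g \<in> carrier_mat m m \<and> invertible_mat g \<and> lead_sub x m = g * Lambda mu m * mat_inv g \<and>
      (\<forall>j<m. g $$ (m - 1, j) = 1)) \<longleftrightarrow> normalized_eigenbasis (lead_sub x m) (Lambda mu m) g" for g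
    using invertible_mat_iff_det[of g m] similar_iff_mult[of "lead_sub x m" m "Lambda mu m" g]
    unfolding normalized_eigenbasis_def Lambda_def by auto
  thus ?thesis unfolding g_mat_def by simp
qed

lemma generic_normalized_eigenbasis_unique:
  assumes gen: "generic n x" and m: "m \<in> {1..n}"
    and g: "normalized_eigenbasis (lead_sub x m) (mat_diag m \<mu>) g"
    and h: "normalized_eigenbasis (lead_sub x m) (mat_diag m \<mu>) h"
  shows "g = h"
proof -
  have gc: "g \<in> carrier_mat m m" and hc: "h \<in> carrier_mat m m"
    using g h unfolding normalized_eigenbasis_def by auto
  have eigen_g: "\<forall>j<m. lead_sub x m *\<^sub>v col g j = \<mu> j \<cdot>\<^sub>v col g j"
    using g unfolding normalized_eigenbasis_def mult_mat_diag_iff_col[OF lead_sub_carrier gc] by simp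
  have eigen_h: "\<forall>j<m. lead_sub x m *\<^sub>v col h j = \<mu> j \<cdot>\<^sub>v col h j"
    using h unfolding normalized_eigenbasis_def mult_mat_diag_iff_col[OF lead_sub_carrier hc] by simp
  have "g $$ (i, j) = h $$ (i, j)" if i: "i < m" and j: "j < m" for i j
  proof -
    define u where "u = col g j - col h j"
    have u: "u \<in> carrier_vec m"
      using col_dim[of g j] col_dim[of h j] gc hc unfolding u_def by (simp add: carrier_matD)
    have "lead_sub x m *\<^sub>v u = lead_sub x m *\<^sub>v col g j - lead_sub x m *\<^sub>v col h j"
      unfolding u_def using gc hc by (intro mult_minus_distrib_mat_vec) auto
    also have "\<dots> = \<mu> j \<cdot>\<^sub>v u"
      using eigen_g eigen_h j gc hc unfolding u_def
      by (intro eq_vecI) (auto simp: right_diff_distrib)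
    finally have "lead_sub x m *\<^sub>v u = \<mu> j \<cdot>\<^sub>v u" .
    moreover have "u $ (m - 1) = 0"
      using g h gc hc j m unfolding u_def normalized_eigenbasis_def by auto
    ultimately have "u = 0\<^sub>v m"
      using generic_eigenvector_last_nonzero[OF gen m, of u "\<mu> j"] u
      unfolding eigenvector_def by auto
    hence "u $ i = 0" using i by simp
    thus ?thesis using gc hc i j unfolding u_def by simp
  qed
  thus ?thesis using gc hc by (intro eq_matI) auto
qed

lemma generic_normalized_eigenbasis_exists:
  assumes gen: "generic n x" and ord: "valid_orderings n x mu" and m: "m \<in> {1..n}"
  shows "\<exists>g. normalized_eigenbasis (lead_sub x m) (Lambda mu m) g"
proof -
  have bij: "bij_betw (mu m) {..<m} {\<mu>. eigenvalue (lead_sub x m) \<mu>}"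
    using ord m unfolding valid_orderings_def by auto
  have "\<exists>v. eigenvector (lead_sub x m) v (mu m j)" if "j < m" for j
    using bij_betw_apply[OF bij, of j] that unfolding eigenvalue_def by simp
  then obtain V where V: "\<And>j. j < m \<Longrightarrow> eigenvector (lead_sub x m) (V j) (mu m j)"
    by metis
  define g where "g = mat m m (\<lambda>(i, j). V j $ i / V j $ (m - 1))"
  have gc: "g \<in> carrier_mat m m" unfolding g_def by simp
  have col_g: "col g j = (1 / V j $ (m - 1)) \<cdot>\<^sub>v V j" if "j < m" for j
    using V[OF that] that unfolding g_def eigenvector_def by (auto intro!: eq_vecI)
  have "lead_sub x m *\<^sub>v col g j = mu m j \<cdot>\<^sub>v col g j" if j: "j < m" for j
  proof -
    have Vj: "V j \<in> carrier_vec m" "lead_sub x m *\<^sub>v V j = mu m j \<cdot>\<^sub>v V j"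
      using V[OF j] unfolding eigenvector_def by auto
    have "lead_sub x m *\<^sub>v col g j = (1 / V j $ (m - 1)) \<cdot>\<^sub>v (lead_sub x m *\<^sub>v V j)"
      using col_g[OF j] mult_mat_vec[OF lead_sub_carrier Vj(1)] by simp
    also have "\<dots> = mu m j \<cdot>\<^sub>v col g j"
      unfolding Vj(2) col_g[OF j] by (simp add: smult_smult_assoc mult.commute)
    finally show ?thesis .
  qed
  hence eigen: "lead_sub x m * g = g * mat_diag m (mu m)"
    unfolding mult_mat_diag_iff_col[OF lead_sub_carrier gc] by blast
  have last_row: "\<forall>j<m. g $$ (m - 1, j) = 1"
    using generic_eigenvector_last_nonzero[OF gen m V] m unfolding g_def by auto
  have "\<forall>j<m. col g j \<noteq> 0\<^sub>v m"
  proof (intro allI impI)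
    fix j assume "j < m"
    hence "col g j $ (m - 1) = 1" using last_row gc m by simp
    thus "col g j \<noteq> 0\<^sub>v m" using m by auto
  qed
  moreover have "inj_on (mu m) {..<m}" using bij by (rule bij_betw_imp_inj_on)
  ultimately have "det g \<noteq> 0"
    using det_nonzero_if_distinct_eigenvalues[OF lead_sub_carrier gc eigen] by blast
  thus ?thesis
    using gc eigen last_row unfolding normalized_eigenbasis_def Lambda_def by auto
qed

lemma generic_ex1_normalized_eigenbasis:
  assumes "generic n x" and "valid_orderings n x mu" and "m \<in> {1..n}"
  shows "\<exists>!g. normalized_eigenbasis (lead_sub x m) (Lambda mu m) g"
  using generic_normalized_eigenbasis_exists[OF assms]
    generic_normalized_eigenbasis_unique[OF assms(1,3)] unfolding Lambda_def by blast

lemma g_mat_normalized_eigenbasis: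
  assumes "generic n x" and "valid_orderings n x mu" and "m \<in> {1..n}"
  shows "normalized_eigenbasis (lead_sub x m) (Lambda mu m) (g_mat x mu m)"
  unfolding g_mat_eq_The by (rule theI'[OF generic_ex1_normalized_eigenbasis[OF assms]])

section \<open>Conjugation by invertible diagonal matrices\<close>

definition diag_conj :: "(nat \<Rightarrow> 'a :: field) \<Rightarrow> 'a mat \<Rightarrow> 'a mat" where
  "diag_conj e A = mat (dim_row A) (dim_col A) (\<lambda>(i, j). e i * A $$ (i, j) / e j)"

lemma diag_conj_dim[simp]:
  "dim_row (diag_conj e A) = dim_row A" "dim_col (diag_conj e A) = dim_col A"
  unfolding diag_conj_def by auto

lemma index_diag_conj[simp]:
  "i < dim_row A \<Longrightarrow> j < dim_col A \<Longrightarrow> diag_conj e A $$ (i, j) = e i * A $$ (i, j) / e j"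
  unfolding diag_conj_def by auto

lemma diag_conj_carrier[simp]: "A \<in> carrier_mat n n \<Longrightarrow> diag_conj e A \<in> carrier_mat n n"
  unfolding diag_conj_def by auto

lemma mat_diag_conj_eq_diag_conj:
  assumes A: "A \<in> carrier_mat n n" and e: "\<forall>i<n. e i \<noteq> 0"
  shows "mat_diag n e * A * mat_inv (mat_diag n e) = diag_conj e A"
  unfolding mat_inv_mat_diag[OF e] mat_diag_mult_left[OF A]
  using A by (subst mat_diag_mult_right[of _ n]) (auto simp: diag_conj_def intro!: eq_matI)

lemma lead_sub_diag_conj:
  assumes "m \<le> dim_row A" and "m \<le> dim_col A"
  shows "lead_sub (diag_conj e A) m = diag_conj e (lead_sub A m)"
  using assms unfolding diag_conj_def lead_sub_def by (auto intro!: eq_matI)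

lemma diag_conj_scale:
  assumes "c \<noteq> 0"
  shows "diag_conj (\<lambda>i. e i / c) A = diag_conj e A"
  using assms unfolding diag_conj_def by (auto intro!: eq_matI)

lemma diag_conj_inverse:
  assumes A: "A \<in> carrier_mat n n" and e: "\<forall>i<n. e i \<noteq> 0"
  shows "diag_conj (\<lambda>i. 1 / e i) (diag_conj e A) = A"
  using A e unfolding diag_conj_def by (auto intro!: eq_matI)

lemma normalized_eigenbasis_diag_conj:
  assumes A: "A \<in> carrier_mat m m" and L: "L \<in> carrier_mat m m"
    and e: "\<forall>i<m. e i \<noteq> 0" and e_last: "e (m - 1) = 1"
    and g: "normalized_eigenbasis A L g"
  shows "normalized_eigenbasis (diag_conj e A) L (mat_diag m e * g)"
proof -
  let ?D = "mat_diag m e" and ?D' = "mat_diag m (\<lambda>i. 1 / e i)"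
  have gc: "g \<in> carrier_mat m m" and det: "det g \<noteq> 0" and eigen: "A * g = g * L"
    and last_row: "\<forall>j<m. g $$ (m - 1, j) = 1"
    using g A unfolding normalized_eigenbasis_def by auto
  have conj: "diag_conj e A = ?D * A * ?D'"
    using mat_diag_conj_eq_diag_conj[OF A e] mat_inv_mat_diag[OF e] by simp
  have "?D' * (?D * g) = g"
    using gc by (simp add: assoc_mult_mat[of _ m m _ m _ m, symmetric] mat_diag_inverse(2)[OF e]
        del: mat_diag_diag)
  have "diag_conj e A * (?D * g) = (?D * A) * (?D' * (?D * g))"
    unfolding conj using A gc by (intro assoc_mult_mat[of _ m m _ m _ m]) auto
  also have "\<dots> = ?D * (A * g)"
    unfolding \<open>?D' * (?D * g) = g\<close> using A gc by (rule assoc_mult_mat[OF mat_diag_dim])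
  also have "\<dots> = ?D * g * L"
    using gc L by (simp add: eigen assoc_mult_mat[of _ m m _ m _ m])
  finally have "diag_conj e A * (?D * g) = ?D * g * L" .
  moreover have "det (?D * g) \<noteq> 0"
    using det det_mat_diag_nonzero[OF e] by (simp add: det_mult[OF mat_diag_dim gc])
  moreover have "\<forall>j<m. (?D * g) $$ (m - 1, j) = 1"
    using last_row e_last gc by (auto simp: mat_diag_mult_left[OF gc])
  ultimately show ?thesis
    using A gc unfolding normalized_eigenbasis_def by auto
qed

lemma normalized_eigenbasis_diag_conj_iff:
  assumes A: "A \<in> carrier_mat m m" and L: "L \<in> carrier_mat m m"
    and e: "\<forall>i<m. e i \<noteq> 0" and e_last: "e (m - 1) = 1"
    and unique: "\<exists>!g. normalized_eigenbasis A L g"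
  shows "normalized_eigenbasis (diag_conj e A) L h \<longleftrightarrow>
    h = mat_diag m e * (THE g. normalized_eigenbasis A L g)"
proof
  assume h: "normalized_eigenbasis (diag_conj e A) L h"
  have e': "\<forall>i<m. 1 / e i \<noteq> 0" "1 / e (m - 1) = 1" using e e_last by auto
  have "normalized_eigenbasis A L (mat_diag m (\<lambda>i. 1 / e i) * h)"
    using normalized_eigenbasis_diag_conj[OF diag_conj_carrier[OF A] L e' h]
    by (simp add: diag_conj_inverse[OF A e])
  hence "mat_diag m (\<lambda>i. 1 / e i) * h = (THE g. normalized_eigenbasis A L g)"
    using unique by (simp add: the1_equality)
  moreover have "h \<in> carrier_mat m m"
    using h A unfolding normalized_eigenbasis_def by auto
  moreover have "mat_diag m e * (mat_diag m (\<lambda>i. 1 / e i) * h) = h" if "h \<in> carrier_mat m m"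
    using that by (simp add: assoc_mult_mat[of _ m m _ m _ m, symmetric] mat_diag_inverse(1)[OF e]
        del: mat_diag_diag)
  ultimately show "h = mat_diag m e * (THE g. normalized_eigenbasis A L g)" by metis
next
  assume "h = mat_diag m e * (THE g. normalized_eigenbasis A L g)"
  thus "normalized_eigenbasis (diag_conj e A) L h"
    using normalized_eigenbasis_diag_conj[OF A L e e_last theI'[OF unique]] by simp
qed

lemma g_mat_diag_conj:
  assumes gen: "generic n x" and ord: "valid_orderings n x mu" and m: "m \<in> {1..n}"
    and e: "\<forall>i<n. e i \<noteq> 0"
  shows "g_mat (diag_conj e x) mu m = mat_diag m (\<lambda>i. e i / e (m - 1)) * g_mat x mu m"
proof -
  have xc: "x \<in> carrier_mat n n" using gen unfolding generic_def by auto
  define e' where "e' i = e i / e (m - 1)" for i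
  have "e (m - 1) \<noteq> 0" using e m by auto
  hence conj: "lead_sub (diag_conj e x) m = diag_conj e' (lead_sub x m)"
    using xc m unfolding e'_def by (simp add: lead_sub_diag_conj diag_conj_scale)
  have "\<forall>i<m. e' i \<noteq> 0" "e' (m - 1) = 1"
    using e m \<open>e (m - 1) \<noteq> 0\<close> unfolding e'_def by auto
  note iff = normalized_eigenbasis_diag_conj_iff[OF lead_sub_carrier Lambda_carrier this
      generic_ex1_normalized_eigenbasis[OF gen ord m]]
  have "g_mat (diag_conj e x) mu m = mat_diag m e' * g_mat x mu m"
    unfolding g_mat_eq_The[of "diag_conj e x"] conj
    by (rule the_equality) (simp_all add: iff g_mat_eq_The)
  thus ?thesis unfolding e'_def .
qed

section \<open>Dual coordinates\<close>

lemma block_diag_conj_last_row: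
  fixes G G' X :: "'a :: comm_ring_1 mat"
  assumes G: "G \<in> carrier_mat m m" and G': "G' \<in> carrier_mat m m"
    and X: "X \<in> carrier_mat (m + 1) (m + 1)" and j: "j < m"
  shows "(four_block_mat G' (0\<^sub>m m 1) (0\<^sub>m 1 m) (1\<^sub>m 1) * X
      * four_block_mat G (0\<^sub>m m 1) (0\<^sub>m 1 m) (1\<^sub>m 1)) $$ (m, j)
    = (\<Sum>l<m. X $$ (m, l) * G $$ (l, j))"
proof -
  let ?B' = "four_block_mat G' (0\<^sub>m m 1) (0\<^sub>m 1 m) (1\<^sub>m 1)"
  let ?B = "four_block_mat G (0\<^sub>m m 1) (0\<^sub>m 1 m) (1\<^sub>m 1)"
  have B': "?B' \<in> carrier_mat (m + 1) (m + 1)" and B: "?B \<in> carrier_mat (m + 1) (m + 1)"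
    using G G' by auto
  have last_row: "row (?B' * X) m = row X m"
    using B' X G' by (auto intro!: eq_vecI simp: scalar_prod_def lessThan_atLeast0[symmetric]
        sum.lessThan_Suc)
  have "(?B' * X * ?B) $$ (m, j) = row (?B' * X) m \<bullet> col ?B j"
    using B' X B j by (subst index_mult_mat) auto
  also have "\<dots> = row X m \<bullet> col ?B j" by (simp only: last_row)
  also have "\<dots> = (\<Sum>l<m. X $$ (m, l) * G $$ (l, j))"
    using X G j by (auto simp: scalar_prod_def lessThan_atLeast0[symmetric] sum.lessThan_Suc)
  finally show ?thesis .
qed

lemma dual_coord_eq_sum:
  assumes g: "g_mat x mu m \<in> carrier_mat m m" and det: "det (g_mat x mu m) \<noteq> 0"
  shows "dual_coord x mu m = vec m (\<lambda>j. \<Sum>l<m. x $$ (m, l) * g_mat x mu m $$ (l, j))"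
proof -
  have "conj_block x mu m $$ (m, j) = (\<Sum>l<m. x $$ (m, l) * g_mat x mu m $$ (l, j))" if "j < m" for j
    unfolding conj_block_def
    using block_diag_conj_last_row[OF g mat_inv_det_nonzero(1)[OF g det] lead_sub_carrier that]
    by simp
  thus ?thesis unfolding dual_coord_def by auto
qed

lemma dual_coord_diag_conj:
  assumes gen: "generic n x" and ord: "valid_orderings n x mu" and m: "m \<in> {1..n - 1}"
    and e: "\<forall>i<n. e i \<noteq> 0"
  shows "dual_coord (diag_conj e x) mu m = (e m / e (m - 1)) \<cdot>\<^sub>v dual_coord x mu m"
proof -
  have xc: "x \<in> carrier_mat n n" using gen unfolding generic_def by auto
  have m': "m \<in> {1..n}" "m < n" using m by auto
  let ?g = "g_mat x mu m" and ?D = "mat_diag m (\<lambda>i. e i / e (m - 1))"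
  have g: "?g \<in> carrier_mat m m" "det ?g \<noteq> 0"
    using g_mat_normalized_eigenbasis[OF gen ord m'(1)] unfolding normalized_eigenbasis_def by auto
  have "\<forall>i<m. e i / e (m - 1) \<noteq> 0" using e m' by auto
  hence "det ?D \<noteq> 0" by (rule det_mat_diag_nonzero)
  hence "det (?D * ?g) \<noteq> 0" using g by (simp add: det_mult[OF mat_diag_dim g(1)])
  moreover have ghat: "g_mat (diag_conj e x) mu m = ?D * ?g"
    using g_mat_diag_conj[OF gen ord m'(1) e] .
  ultimately have ghat_det: "det (g_mat (diag_conj e x) mu m) \<noteq> 0" by simp
  have ghat_carrier: "g_mat (diag_conj e x) mu m \<in> carrier_mat m m" using ghat g by simp
  have "(\<Sum>l<m. diag_conj e x $$ (m, l) * (?D * ?g) $$ (l, j))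
      = e m / e (m - 1) * (\<Sum>l<m. x $$ (m, l) * ?g $$ (l, j))" if j: "j < m" for j
    unfolding sum_distrib_left
  proof (rule sum.cong)
    fix l assume "l \<in> {..<m}"
    thus "diag_conj e x $$ (m, l) * (?D * ?g) $$ (l, j) = e m / e (m - 1) * (x $$ (m, l) * ?g $$ (l, j))"
      using xc g(1) j m' e by (simp add: mat_diag_mult_left[OF g(1)])
  qed simp
  thus ?thesis
    unfolding dual_coord_eq_sum[OF g] dual_coord_eq_sum[OF ghat_carrier ghat_det] ghat
    by (auto intro!: eq_vecI)
qed

theorem mainTheorem4:
  fixes n :: nat and x :: "complex mat" and mu :: "nat \<Rightarrow> nat \<Rightarrow> complex"
    and d :: "nat \<Rightarrow> complex"
  assumes "n \<ge> 2"
    and "generic n x"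
    and "valid_orderings n x mu"
    and "\<forall>i\<in>{1..n}. d i \<noteq> 0"
  shows "let D = mat_diag n (\<lambda>j. d (j + 1)); xh = D * x * mat_inv D in
         \<forall>m\<in>{1..n-1}. dual_coord xh mu m = (d (m + 1) / d m) \<cdot>\<^sub>v dual_coord x mu m"
proof -
  have xc: "x \<in> carrier_mat n n" using assms(2) unfolding generic_def by auto
  have d: "\<forall>j<n. d (j + 1) \<noteq> 0" using assms(4) by auto
  show ?thesis
    unfolding Let_def mat_diag_conj_eq_diag_conj[OF xc d]
    using dual_coord_diag_conj[OF assms(2,3) _ d] by simp
qed

end
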